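(* Let $C$ be a convex cone in a real vector space and $f:C\to\mathbb{R}$ a non-negative function that is positively homogeneous of degree $\alpha\ge 1$. Then $f$ is sub-convex if and only if $f$ is convex.
   Context: A cone is a subset $C$ with $\lambda C\subseteq C$ for all $\lambda>0$. $f$ is positively homogeneous of degree $\alpha$ if $f(\lambda x)=\lambda^{\alpha}f(x)$ for $x\in C$, $\lambda>0$. $f$ is sub-convex if every sublevel set $S_r(f)=\{x\in C: f(x)\le r\}$, $r\in\mathbb{R}$, is convex. *)

theory Defs
  imports "HOL-Analysis.Analysis"
begin

definition pos_cone :: "'a::real_vector set \<Rightarrow> bool" where
  "pos_cone C \<longleftrightarrow> (\<forall>t::real. t > 0 \<longrightarrow> (\<forall>x\<in>C. t *\<^sub>R x \<in> C))"

definition pos_homogeneous_on :: "'a::real_vector set \<Rightarrow> real \<Rightarrow> ('a \<Rightarrow> real) \<Rightarrow> bool" where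
  "pos_homogeneous_on C \<alpha> f \<longleftrightarrow>
     (\<forall>x\<in>C. \<forall>t::real. t > 0 \<longrightarrow> f (t *\<^sub>R x) = t powr \<alpha> * f x)"

definition sub_convex_on :: "'a::real_vector set \<Rightarrow> ('a \<Rightarrow> real) \<Rightarrow> bool" where
  "sub_convex_on C f \<longleftrightarrow> (\<forall>r::real. convex {x\<in>C. f x \<le> r})"

end

theory Submission
  imports Defs
begin

text \<open>
  Convex functions have convex sublevel sets. Conversely, let \<open>f\<close> be sub-convex and
  \<open>\<alpha>\<close>-homogeneous with \<open>\<alpha> \<ge> 1\<close>. If \<open>f x \<le> a\<^sup>\<alpha>\<close> and \<open>f y \<le> b\<^sup>\<alpha>\<close>, then \<open>x/a\<close> and \<open>y/b\<close>
  lie in the convex set \<open>{f \<le> 1}\<close>, and \<open>(1-t)x + ty\<close> is \<open>s\<close> times a convex combination of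
  them, where \<open>s = (1-t)a + tb\<close>. Hence \<open>f((1-t)x + ty) \<le> s\<^sup>\<alpha> \<le> (1-t)a\<^sup>\<alpha> + tb\<^sup>\<alpha>\<close> by
  convexity of \<open>s \<mapsto> s\<^sup>\<alpha>\<close>; choosing \<open>a\<^sup>\<alpha> = f x + \<epsilon>\<close>, \<open>b\<^sup>\<alpha> = f y + \<epsilon>\<close> gives convexity of \<open>f\<close>.
\<close>

lemma convex_on_imp_sub_convex_on:
  assumes "convex_on C f"
  shows "sub_convex_on C f"
  unfolding sub_convex_on_def convex_alt
proof (intro allI ballI impI)
  fix r x y and u :: real
  assume x: "x \<in> {x\<in>C. f x \<le> r}" and y: "y \<in> {x\<in>C. f x \<le> r}" and u: "0 \<le> u \<and> u \<le> 1"
  have "(1 - u) *\<^sub>R x + u *\<^sub>R y \<in> C"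
    using convex_on_imp_convex[OF assms] x y u unfolding convex_alt by blast
  moreover have "f ((1 - u) *\<^sub>R x + u *\<^sub>R y) \<le> (1 - u) * f x + u * f y"
    using convex_onD[OF assms] x y u by blast
  moreover have "(1 - u) * f x + u * f y \<le> (1 - u) * r + u * r"
    using x y u by (intro add_mono mult_left_mono) auto
  ultimately show "(1 - u) *\<^sub>R x + u *\<^sub>R y \<in> {x\<in>C. f x \<le> r}"
    by (simp add: algebra_simps)
qed

lemma sub_convex_on_imp_convex:
  assumes "sub_convex_on C f"
  shows "convex C"
  unfolding convex_alt
proof (intro ballI allI impI)
  fix x y and u :: real
  assume x: "x \<in> C" and y: "y \<in> C" and u: "0 \<le> u \<and> u \<le> 1"
  let ?S = "{z\<in>C. f z \<le> max (f x) (f y)}"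
  have "convex ?S" using assms unfolding sub_convex_on_def by blast
  moreover have "x \<in> ?S" "y \<in> ?S" using x y by auto
  ultimately have "(1 - u) *\<^sub>R x + u *\<^sub>R y \<in> ?S" using u unfolding convex_alt by blast
  then show "(1 - u) *\<^sub>R x + u *\<^sub>R y \<in> C" by blast
qed

lemma pos_homogeneous_on_scaled_le_one:
  assumes "pos_cone C" and "pos_homogeneous_on C \<alpha> f"
    and "x \<in> C" and "a > 0" and "f x \<le> a powr \<alpha>"
  shows "(1 / a) *\<^sub>R x \<in> C" and "f ((1 / a) *\<^sub>R x) \<le> 1"
proof -
  show "(1 / a) *\<^sub>R x \<in> C" using assms(1,3,4) unfolding pos_cone_def by simp
  have "f ((1 / a) *\<^sub>R x) = (1 / a) powr \<alpha> * f x"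
    using assms(2-4) unfolding pos_homogeneous_on_def by simp
  also have "\<dots> \<le> (1 / a) powr \<alpha> * a powr \<alpha>" using assms(5) by (simp add: mult_left_mono)
  also have "\<dots> = 1" using assms(4) by (simp add: powr_divide)
  finally show "f ((1 / a) *\<^sub>R x) \<le> 1" .
qed

lemma sub_convex_homogeneous_convex_comb_le:
  fixes f :: "'a::real_vector \<Rightarrow> real"
  assumes sc: "sub_convex_on C f" and cone: "pos_cone C"
    and hom: "pos_homogeneous_on C \<alpha> f" and "\<alpha> \<ge> 1"
    and x: "x \<in> C" and y: "y \<in> C" and a: "a > 0" and b: "b > 0"
    and fx: "f x \<le> a powr \<alpha>" and fy: "f y \<le> b powr \<alpha>"
    and t: "0 \<le> t" "t \<le> 1"
  shows "f ((1 - t) *\<^sub>R x + t *\<^sub>R y) \<le> (1 - t) * a powr \<alpha> + t * b powr \<alpha>"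
proof -
  define s where "s = (1 - t) * a + t * b"
  define l where "l = t * b / s"
  define w where "w = (1 - l) *\<^sub>R ((1 / a) *\<^sub>R x) + l *\<^sub>R ((1 / b) *\<^sub>R y)"
  have s: "s > 0"
    using a b t by (cases "t = 0") (auto simp: s_def intro: add_nonneg_pos)
  have l: "0 \<le> l" "l \<le> 1" using a b s t by (auto simp: l_def s_def)
  have "convex {z\<in>C. f z \<le> 1}" using sc unfolding sub_convex_on_def by blast
  then have w: "w \<in> C" "f w \<le> 1"
    using pos_homogeneous_on_scaled_le_one[OF cone hom x a fx]
      pos_homogeneous_on_scaled_le_one[OF cone hom y b fy] l
    unfolding w_def convex_alt by blast+
  have "1 - l = (1 - t) * a / s" using s by (simp add: l_def s_def field_simps)
  then have "(1 - t) *\<^sub>R x + t *\<^sub>R y = s *\<^sub>R w"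
    using s a b by (simp add: w_def l_def scaleR_add_right)
  then have "f ((1 - t) *\<^sub>R x + t *\<^sub>R y) = s powr \<alpha> * f w"
    using hom w s unfolding pos_homogeneous_on_def by simp
  also have "\<dots> \<le> s powr \<alpha>" using w by (simp add: mult_left_le)
  also have "\<dots> \<le> (1 - t) * a powr \<alpha> + t * b powr \<alpha>"
    using convex_onD[OF powr_convex[OF \<open>\<alpha> \<ge> 1\<close>], of t a b] t a b by (simp add: s_def)
  finally show ?thesis .
qed

lemma sub_convex_homogeneous_imp_convex_on:
  fixes f :: "'a::real_vector \<Rightarrow> real"
  assumes sc: "sub_convex_on C f" and cone: "pos_cone C"
    and nonneg: "\<forall>x\<in>C. f x \<ge> 0"
    and hom: "pos_homogeneous_on C \<alpha> f" and "\<alpha> \<ge> 1"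
  shows "convex_on C f"
proof (rule convex_onI[OF _ sub_convex_on_imp_convex[OF sc]])
  fix t x y assume t: "(0::real) < t" "t < 1" and x: "x \<in> C" and y: "y \<in> C"
  show "f ((1 - t) *\<^sub>R x + t *\<^sub>R y) \<le> (1 - t) * f x + t * f y"
  proof (rule field_le_epsilon)
    fix d :: real assume d: "d > 0"
    then have pos: "f x + d > 0" "f y + d > 0" using nonneg x y by fastforce+
    have root: "((f z + d) powr (1 / \<alpha>)) powr \<alpha> = f z + d" if "f z + d > 0" for z
      using that \<open>\<alpha> \<ge> 1\<close> by (simp add: powr_powr)
    have "f ((1 - t) *\<^sub>R x + t *\<^sub>R y)
        \<le> (1 - t) * ((f x + d) powr (1 / \<alpha>)) powr \<alpha> + t * ((f y + d) powr (1 / \<alpha>)) powr \<alpha>"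
      using pos d t root[of x] root[of y]
      by (intro sub_convex_homogeneous_convex_comb_le[OF sc cone hom \<open>\<alpha> \<ge> 1\<close> x y]) auto
    also have "\<dots> = (1 - t) * f x + t * f y + d"
      using root[OF pos(1)] root[OF pos(2)] by (simp add: algebra_simps)
    finally show "f ((1 - t) *\<^sub>R x + t *\<^sub>R y) \<le> (1 - t) * f x + t * f y + d" .
  qed
qed

theorem mainTheorem10:
  fixes C :: "'a::real_vector set" and f :: "'a \<Rightarrow> real" and \<alpha> :: real
  assumes "convex C" and "pos_cone C"
    and "\<forall>x\<in>C. f x \<ge> 0"
    and "pos_homogeneous_on C \<alpha> f" and "\<alpha> \<ge> 1"
  shows "sub_convex_on C f \<longleftrightarrow> convex_on C f"
  using sub_convex_homogeneous_imp_convex_on[OF _ assms(2-5)] convex_on_imp_sub_convex_on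
  by blast

end
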